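(* Let $(I,\preceq)$ be a finite poset; for each $i\in I$ let $X_i$ be a finite set with $|X_i|\ge2$ and $P_i$ a Markov chain on $X_i$, and let $\mathbb{L}_i$ be the set of all partitions of $X_i$ with respect to which $P_i$ is lumpable. Let $\{p_i^0\}_{i\in I}$ be a strict probability measure on $I$ and $\mathcal{P}$ the generalized crested product of the $P_i$ defined by $(I,\preceq)$ and $\{p_i^0\}$. For each $i\in I$ let $\Phi_i:X_{A(i)}\to\mathbb{L}_i$ be a map (when $A(i)=\emptyset$, $X_{A(i)}$ is a one-point set and $\Phi_i$ is a single choice of a partition in $\mathbb L_i$), such that $\Phi_i(x_{A(i)})=\Phi_i(y_{A(i)})$ whenever, for every $j\in A(i)$, $\Phi_j(x_{A(j)})=\Phi_j(y_{A(j)})$ and $x_j,y_j$ lie in the same part of this partition. Let $\mathcal{L}$ be the partition of $X=\prod_{i\in I}X_i$ (the generalized product of lumpings) into the classes of the relation: $x\approx y$ iff for every $i\in I$, $\Phi_i(x_{A(i)})=\Phi_i(y_{A(i)})$ and $x_i,y_i$ lie in the same part of this partition of $X_i$. Then $\mathcal{P}$ is lumpable with respect to $\mathcal{L}$.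
   Context: $A(i)=\{j\in I: j\succ i\}$, $H(i)=\{j\in I:j\prec i\}$, $H[i]=H(i)\sqcup\{i\}$; for $J\subseteq I$, $X_J=\prod_{j\in J}X_j$ and $x_J$ is the projection of $x$ onto $X_J$. The generalized crested product is the chain on $X$ with $p(x,y)=\sum_{i\in I}p_i^0\,p_i(x_i,y_i)\prod_{j\in H(i)}\frac{1}{|X_j|}\prod_{j\notin H[i]}\delta(x_j,y_j)$ ($\delta$ the Kronecker delta, $p_i^0>0$, $\sum_ip_i^0=1$). A chain $p$ is lumpable with respect to a partition if for all parts $L,L'$ the map $x\mapsto\sum_{y\in L'}p(x,y)$ is constant on $L$. *)

theory Defs
  imports Complex_Main "HOL-Library.Disjoint_Sets" "HOL-Library.FuncSet"
begin

text \<open>Poset (I, R): R is a partial order on the finite index set I.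
  above R I i = A(i) = {j in I. j > i};  below R I i = H(i) = {j in I. j < i}.\<close>

definition above :: "('i \<times> 'i) set \<Rightarrow> 'i set \<Rightarrow> 'i \<Rightarrow> 'i set" where
  "above R I i = {j \<in> I. (i, j) \<in> R \<and> j \<noteq> i}"

definition below :: "('i \<times> 'i) set \<Rightarrow> 'i set \<Rightarrow> 'i \<Rightarrow> 'i set" where
  "below R I i = {j \<in> I. (j, i) \<in> R \<and> j \<noteq> i}"

definition markov_chain :: "'a set \<Rightarrow> ('a \<Rightarrow> 'a \<Rightarrow> real) \<Rightarrow> bool" where
  "markov_chain S p \<longleftrightarrow> finite S \<and> (\<forall>x\<in>S. \<forall>y\<in>S. p x y \<ge> 0) \<and>
     (\<forall>x\<in>S. (\<Sum>y\<in>S. p x y) = 1)"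

definition lumpable :: "'a set \<Rightarrow> ('a \<Rightarrow> 'a \<Rightarrow> real) \<Rightarrow> 'a set set \<Rightarrow> bool" where
  "lumpable S p L \<longleftrightarrow> partition_on S L \<and>
     (\<forall>B\<in>L. \<forall>B'\<in>L. \<forall>x\<in>B. \<forall>y\<in>B. (\<Sum>z\<in>B'. p x z) = (\<Sum>z\<in>B'. p y z))"

definition crested_product ::
  "'i set \<Rightarrow> ('i \<times> 'i) set \<Rightarrow> ('i \<Rightarrow> 'a set) \<Rightarrow> ('i \<Rightarrow> real) \<Rightarrow> ('i \<Rightarrow> 'a \<Rightarrow> 'a \<Rightarrow> real)
    \<Rightarrow> ('i \<Rightarrow> 'a) \<Rightarrow> ('i \<Rightarrow> 'a) \<Rightarrow> real" where
  "crested_product I R X p0 P x y =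
     (\<Sum>i\<in>I. p0 i * P i (x i) (y i)
        * (\<Prod>j\<in>below R I i. 1 / real (card (X j)))
        * (\<Prod>j\<in>I - insert i (below R I i). if x j = y j then 1 else 0))"

definition same_block :: "'a set set \<Rightarrow> 'a \<Rightarrow> 'a \<Rightarrow> bool" where
  "same_block L a b \<longleftrightarrow> (\<exists>B\<in>L. a \<in> B \<and> b \<in> B)"

definition prod_lump_rel ::
  "'i set \<Rightarrow> ('i \<times> 'i) set \<Rightarrow> ('i \<Rightarrow> 'a set) \<Rightarrow> ('i \<Rightarrow> ('i \<Rightarrow> 'a) \<Rightarrow> 'a set set)
     \<Rightarrow> (('i \<Rightarrow> 'a) \<times> ('i \<Rightarrow> 'a)) set" where
  "prod_lump_rel I R X \<Phi> = {(x, y). x \<in> PiE I X \<and> y \<in> PiE I X \<and>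
     (\<forall>i\<in>I. \<Phi> i (restrict x (above R I i)) = \<Phi> i (restrict y (above R I i)) \<and>
             same_block (\<Phi> i (restrict x (above R I i))) (x i) (y i))}"

definition prod_lumping ::
  "'i set \<Rightarrow> ('i \<times> 'i) set \<Rightarrow> ('i \<Rightarrow> 'a set) \<Rightarrow> ('i \<Rightarrow> ('i \<Rightarrow> 'a) \<Rightarrow> 'a set set)
     \<Rightarrow> ('i \<Rightarrow> 'a) set set" where
  "prod_lumping I R X \<Phi> = PiE I X // prod_lump_rel I R X \<Phi>"

end

theory Submission
  imports Defs
begin

text \<open>
  Fix a target class \<open>B'\<close> and \<open>x \<approx> y\<close>. Splitting the crested product by the coordinate \<open>i\<close>
  that moves, the mass \<open>x\<close> sends into \<open>B'\<close> is a combination, with weights independent of \<open>x\<close>,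
  of the sums of \<open>P\<^sub>i(x\<^sub>i, z\<^sub>i)\<close> over the fibre of those \<open>z \<in> B'\<close> that agree with \<open>x\<close> off \<open>H[i]\<close>.
  The complement of \<open>H[i]\<close> is an up-set, so the conditions defining \<open>\<approx>\<close> at its elements only
  involve coordinates inside it; hence overwriting these coordinates of \<open>z\<close> by those of \<open>y\<close>
  maps the fibre over \<open>x\<close> bijectively onto the fibre over \<open>y\<close> without changing \<open>z\<^sub>i\<close>.
  It remains to replace \<open>x\<^sub>i\<close> by \<open>y\<^sub>i\<close>: moving \<open>z\<^sub>i\<close> within its block of \<open>\<Phi>\<^sub>i(x_A(i))\<close>
  does not leave \<open>B'\<close>, so the number of fibre elements with \<open>z\<^sub>i = a\<close> is constant on blocks,
  and lumpability of \<open>P\<^sub>i\<close> finishes the argument.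
\<close>

lemma same_block_refl: "partition_on S L \<Longrightarrow> a \<in> S \<Longrightarrow> same_block L a a"
  unfolding same_block_def partition_on_def by blast

lemma same_block_sym: "same_block L a b \<Longrightarrow> same_block L b a"
  unfolding same_block_def by blast

lemma same_block_trans:
  "partition_on S L \<Longrightarrow> same_block L a b \<Longrightarrow> same_block L b c \<Longrightarrow> same_block L a c"
  unfolding same_block_def partition_on_def disjoint_def by blast

lemma prod_indicator_eq:
  "finite J \<Longrightarrow> (\<Prod>j\<in>J. if x j = z j then 1 else 0 :: real) = (if \<forall>j\<in>J. z j = x j then 1 else 0)"
  by (induction J rule: finite_induct) auto

lemma sum_mult_eq_if_block_sums_eq:
  fixes p q g :: "'a \<Rightarrow> 'b::comm_semiring_1"
  assumes part: "partition_on S L" and "finite S"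
    and block_sums: "\<And>C. C \<in> L \<Longrightarrow> (\<Sum>a\<in>C. p a) = (\<Sum>a\<in>C. q a)"
    and block_const: "\<And>C a b. C \<in> L \<Longrightarrow> a \<in> C \<Longrightarrow> b \<in> C \<Longrightarrow> g a = g b"
  shows "(\<Sum>a\<in>S. g a * p a) = (\<Sum>a\<in>S. g a * q a)"
proof -
  have S: "S = \<Union>L" and disj: "disjoint L"
    using part by (auto dest: partition_onD1 partition_onD2)
  have fin: "\<forall>C\<in>L. finite C" using \<open>finite S\<close> S by (metis Union_upper finite_subset)
  have "(\<Sum>a\<in>C. g a * p a) = (\<Sum>a\<in>C. g a * q a)" if C: "C \<in> L" for C
  proof -
    obtain c where c: "c \<in> C" using part C partition_onD3 by fastforce
    have "(\<Sum>a\<in>C. g a * p a) = g c * (\<Sum>a\<in>C. p a)"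
      by (simp add: sum_distrib_left block_const[OF C _ c])
    also have "\<dots> = (\<Sum>a\<in>C. g a * q a)"
      by (simp add: sum_distrib_left block_const[OF C _ c] block_sums[OF C])
    finally show ?thesis .
  qed
  then show ?thesis unfolding S sum.Union_disjoint_sets[OF fin disj] comp_def by (rule sum.cong[OF refl])
qed

locale lumping_family =
  fixes I :: "'i set" and R :: "('i \<times> 'i) set" and X :: "'i \<Rightarrow> 'a set"
    and P :: "'i \<Rightarrow> 'a \<Rightarrow> 'a \<Rightarrow> real"
    and \<Phi> :: "'i \<Rightarrow> ('i \<Rightarrow> 'a) \<Rightarrow> 'a set set"
  assumes finite_I: "finite I"
    and poset: "partial_order_on I R"
    and finite_X: "\<And>i. i \<in> I \<Longrightarrow> finite (X i)"
    and Phi_lumpable: "\<And>i z. i \<in> I \<Longrightarrow> z \<in> PiE (above R I i) X \<Longrightarrow>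
                      lumpable (X i) (P i) (\<Phi> i z)"
    and Phi_compat: "\<And>i x y. i \<in> I \<Longrightarrow> x \<in> PiE I X \<Longrightarrow> y \<in> PiE I X \<Longrightarrow>
        (\<forall>j\<in>above R I i. \<Phi> j (restrict x (above R I j)) = \<Phi> j (restrict y (above R I j))
            \<and> same_block (\<Phi> j (restrict x (above R I j))) (x j) (y j)) \<Longrightarrow>
        \<Phi> i (restrict x (above R I i)) = \<Phi> i (restrict y (above R I i))"
begin

abbreviation "A \<equiv> above R I"
abbreviation "H \<equiv> below R I"
abbreviation "lump_rel \<equiv> prod_lump_rel I R X \<Phi>"

definition not_below :: "'i \<Rightarrow> 'i set" where
  "not_below i = I - insert i (H i)"

lemma trans_R: "trans R" and antisym_R: "antisym R"
  using partial_order_onD[OF poset] by auto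

lemma above_subset: "A k \<subseteq> I"
  by (auto simp: above_def)

lemma not_below_subset: "not_below i \<subseteq> I"
  by (auto simp: not_below_def)

lemma not_in_not_below: "i \<notin> not_below i"
  by (simp add: not_below_def)

lemma above_trans: assumes "j \<in> A k" "l \<in> A j" shows "l \<in> A k"
proof -
  have kj: "(k, j) \<in> R" "j \<noteq> k" and jl: "(j, l) \<in> R" "l \<noteq> j" "l \<in> I"
    using assms by (auto simp: above_def)
  have "(k, l) \<in> R" using trans_R kj jl by (meson transD)
  moreover have "l \<noteq> k" using antisym_R kj jl by (meson antisymD)
  ultimately show ?thesis using jl by (simp add: above_def)
qed

lemma card_above_less: assumes "j \<in> A k" shows "card (A j) < card (A k)"
proof (rule psubset_card_mono)
  show "finite (A k)" using finite_I above_subset finite_subset by blast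
  have "j \<notin> A j" by (simp add: above_def)
  then show "A j \<subset> A k" using assms above_trans by blast
qed

lemma above_subset_not_below: assumes "k \<in> not_below i" shows "A k \<subseteq> not_below i"
proof
  fix j assume j: "j \<in> A k"
  have kj: "(k, j) \<in> R" "j \<in> I" and k: "k \<noteq> i" "(k, i) \<notin> R"
    using j assms by (auto simp: above_def not_below_def below_def)
  have "(j, i) \<notin> R" using trans_R kj k by (meson transD)
  moreover have "j \<noteq> i" using kj k by blast
  ultimately show "j \<in> not_below i" using kj by (simp add: not_below_def below_def)
qed

lemma above_subset_not_below_self: "A i \<subseteq> not_below i"
  using antisym_R unfolding not_below_def above_def below_def
  by (blast dest: antisymD)

lemma lumpable_Phi:
  assumes "k \<in> I" "z \<in> PiE I X" shows "lumpable (X k) (P k) (\<Phi> k (restrict z (A k)))"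
proof (rule Phi_lumpable)
  show "restrict z (A k) \<in> PiE (A k) X" using assms(2) above_subset by (auto simp: PiE_iff)
qed (fact assms(1))

lemma partition_on_Phi: "k \<in> I \<Longrightarrow> z \<in> PiE I X \<Longrightarrow> partition_on (X k) (\<Phi> k (restrict z (A k)))"
  using lumpable_Phi by (simp add: lumpable_def)

definition agrees_at :: "('i \<Rightarrow> 'a) \<Rightarrow> ('i \<Rightarrow> 'a) \<Rightarrow> 'i \<Rightarrow> bool" where
  "agrees_at x y k \<longleftrightarrow> \<Phi> k (restrict x (A k)) = \<Phi> k (restrict y (A k))
     \<and> same_block (\<Phi> k (restrict x (A k))) (x k) (y k)"

lemma lump_rel_iff:
  "(x, y) \<in> lump_rel \<longleftrightarrow> x \<in> PiE I X \<and> y \<in> PiE I X \<and> (\<forall>k\<in>I. agrees_at x y k)"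
  by (simp add: prod_lump_rel_def agrees_at_def)

lemma agrees_at_cong:
  assumes "\<forall>j\<in>insert k (A k). x j = x' j \<and> y j = y' j"
  shows "agrees_at x y k = agrees_at x' y' k"
proof -
  have "restrict x (A k) = restrict x' (A k)" "restrict y (A k) = restrict y' (A k)"
    using assms by (auto intro: restrict_ext)
  then show ?thesis using assms by (simp add: agrees_at_def)
qed

lemma agrees_at_sym: "agrees_at x y k \<Longrightarrow> agrees_at y x k"
  unfolding agrees_at_def using same_block_sym by metis

lemma agrees_at_trans:
  "k \<in> I \<Longrightarrow> x \<in> PiE I X \<Longrightarrow> agrees_at x y k \<Longrightarrow> agrees_at y z k \<Longrightarrow> agrees_at x z k"
  unfolding agrees_at_def using same_block_trans[OF partition_on_Phi] by metis

lemma equiv_lump_rel: "equiv (PiE I X) lump_rel"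
proof (rule equivI)
  show "lump_rel \<subseteq> PiE I X \<times> PiE I X" by (auto simp: lump_rel_iff)
  show "refl_on (PiE I X) lump_rel"
    unfolding refl_on_def lump_rel_iff agrees_at_def
    by (auto intro: same_block_refl[OF partition_on_Phi] simp: PiE_iff)
  show "sym lump_rel"
    by (rule symI) (simp add: lump_rel_iff agrees_at_sym)
  show "trans lump_rel"
    by (rule transI) (auto simp: lump_rel_iff intro: agrees_at_trans)
qed

lemma lump_class_subset: "B \<in> PiE I X // lump_rel \<Longrightarrow> B \<subseteq> PiE I X"
  using in_quotient_imp_subset[OF equiv_lump_rel] .

lemma finite_lump_class: "B \<in> PiE I X // lump_rel \<Longrightarrow> finite B"
  using finite_PiE[OF finite_I finite_X] lump_class_subset by (rule finite_subset[rotated])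

text \<open>Coinciding at \<open>k\<close> does not give agreement at \<open>k\<close> by itself, since \<open>\<Phi>\<^sub>k\<close> depends on
  the coordinates above \<open>k\<close>; it follows by induction down the poset from \<open>Phi_compat\<close>.\<close>

lemma lump_rel_if_eq_on:
  assumes z: "z \<in> PiE I X" and z': "z' \<in> PiE I X"
    and eq_on: "\<And>j. j \<in> D \<Longrightarrow> z j = z' j"
    and agrees_off: "\<And>k. k \<in> I - D \<Longrightarrow> agrees_at z z' k"
  shows "(z, z') \<in> lump_rel"
proof -
  have "agrees_at z z' k" if "k \<in> I" for k
    using that
  proof (induction "card (A k)" arbitrary: k rule: less_induct)
    case less
    show ?case
    proof (cases "k \<in> D")
      case True
      have "\<forall>j\<in>A k. agrees_at z z' j"
        using less card_above_less above_subset by blast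
      then have "\<Phi> k (restrict z (A k)) = \<Phi> k (restrict z' (A k))"
        using Phi_compat[OF less.prems z z'] unfolding agrees_at_def by blast
      moreover have "same_block (\<Phi> k (restrict z (A k))) (z k) (z' k)"
        using same_block_refl[OF partition_on_Phi[OF less.prems z]] eq_on[OF True] z less.prems
        by (auto simp: PiE_iff)
      ultimately show ?thesis by (simp add: agrees_at_def)
    qed (use agrees_off less.prems in blast)
  qed
  then show ?thesis using z z' by (simp add: lump_rel_iff)
qed

text \<open>The states of \<open>B\<close> reachable from \<open>x\<close> through the \<open>i\<close>-th summand of the crested product.\<close>

definition fibre :: "('i \<Rightarrow> 'a) set \<Rightarrow> ('i \<Rightarrow> 'a) \<Rightarrow> 'i \<Rightarrow> ('i \<Rightarrow> 'a) set" where
  "fibre B x i = {z \<in> B. \<forall>j\<in>not_below i. z j = x j}"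

lemma sum_crested_product_eq_fibre_sums:
  assumes "finite B"
  shows "(\<Sum>z\<in>B. crested_product I R X p0 P x z)
    = (\<Sum>i\<in>I. p0 i * (\<Prod>j\<in>H i. 1 / real (card (X j))) * (\<Sum>z\<in>fibre B x i. P i (x i) (z i)))"
proof -
  have fibre_sum: "(\<Sum>z\<in>B. (\<Prod>j\<in>not_below i. if x j = z j then 1 else 0) * f z)
      = (\<Sum>z\<in>fibre B x i. f z)" for i and f :: "_ \<Rightarrow> real"
  proof -
    have "finite (not_below i)" using finite_subset[OF not_below_subset finite_I] .
    then have "(\<Sum>z\<in>B. (\<Prod>j\<in>not_below i. if x j = z j then 1 else 0) * f z)
        = (\<Sum>z\<in>B. if \<forall>j\<in>not_below i. z j = x j then f z else 0)"
      by (intro sum.cong) (simp_all add: prod_indicator_eq)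
    then show ?thesis by (simp add: fibre_def sum.inter_filter[OF assms])
  qed
  have "(\<Sum>z\<in>B. crested_product I R X p0 P x z)
      = (\<Sum>i\<in>I. \<Sum>z\<in>B. p0 i * (\<Prod>j\<in>H i. 1 / real (card (X j)))
           * ((\<Prod>j\<in>not_below i. if x j = z j then 1 else 0) * P i (x i) (z i)))"
    unfolding crested_product_def not_below_def[symmetric] by (subst sum.swap) (simp add: ac_simps)
  also have "\<dots> = (\<Sum>i\<in>I. p0 i * (\<Prod>j\<in>H i. 1 / real (card (X j)))
           * (\<Sum>z\<in>fibre B x i. P i (x i) (z i)))"
    by (simp add: sum_distrib_left[symmetric] fibre_sum)
  finally show ?thesis .
qed

lemma overwrite_in_fibre:
  assumes xy: "(x, y) \<in> lump_rel" and B: "B \<in> PiE I X // lump_rel" and z: "z \<in> fibre B x i"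
  shows "(\<lambda>k. if k \<in> not_below i then y k else z k) \<in> fibre B y i"
proof -
  define z' where "z' = (\<lambda>k. if k \<in> not_below i then y k else z k)"
  have zB: "z \<in> B" and z_eq: "\<forall>j\<in>not_below i. z j = x j" using z by (auto simp: fibre_def)
  have zP: "z \<in> PiE I X" using zB lump_class_subset[OF B] by blast
  have z'P: "z' \<in> PiE I X"
    using zP xy not_below_subset by (auto simp: z'_def PiE_iff lump_rel_iff extensional_def)
  have "(z, z') \<in> lump_rel"
  proof (rule lump_rel_if_eq_on[OF zP z'P, of "I - not_below i"])
    fix k assume k: "k \<in> I - (I - not_below i)"
    then have "agrees_at z z' k = agrees_at x y k"
      using above_subset_not_below z_eq by (intro agrees_at_cong) (auto simp: z'_def)
    then show "agrees_at z z' k" using xy k by (simp add: lump_rel_iff)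
  qed (simp add: z'_def)
  then have "z' \<in> B" using in_quotient_imp_closed[OF equiv_lump_rel B zB] by blast
  then show ?thesis by (simp add: fibre_def z'_def)
qed

lemma fibre_sum_eq_if_related:
  assumes xy: "(x, y) \<in> lump_rel" and B: "B \<in> PiE I X // lump_rel"
  shows "(\<Sum>z\<in>fibre B x i. f (z i)) = (\<Sum>z\<in>fibre B y i. f (z i))"
proof (rule sum.reindex_bij_witness[where j="\<lambda>z k. if k \<in> not_below i then y k else z k"
      and i="\<lambda>z k. if k \<in> not_below i then x k else z k"])
  have yx: "(y, x) \<in> lump_rel" using xy equiv_lump_rel by (meson equivE symD)
  fix z
  show "z \<in> fibre B x i \<Longrightarrow> (\<lambda>k. if k \<in> not_below i then y k else z k) \<in> fibre B y i"
    by (rule overwrite_in_fibre[OF xy B])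
  show "z \<in> fibre B y i \<Longrightarrow> (\<lambda>k. if k \<in> not_below i then x k else z k) \<in> fibre B x i"
    by (rule overwrite_in_fibre[OF yx B])
qed (auto simp: fibre_def not_in_not_below)

lemma finite_fibre: "B \<in> PiE I X // lump_rel \<Longrightarrow> finite (fibre B x i)"
  unfolding fibre_def by (simp add: finite_lump_class)

lemma card_fibre_value_le:
  assumes x: "x \<in> PiE I X" and i: "i \<in> I" and B: "B \<in> PiE I X // lump_rel"
    and C: "C \<in> \<Phi> i (restrict x (A i))" and a: "a \<in> C" and b: "b \<in> C"
  shows "card {z\<in>fibre B x i. z i = a} \<le> card {z\<in>fibre B x i. z i = b}"
proof (rule card_inj_on_le)
  show "finite {z\<in>fibre B x i. z i = b}" using finite_fibre[OF B] by simp
  show "inj_on (\<lambda>z. z(i := b)) {z\<in>fibre B x i. z i = a}"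
  proof (rule inj_onI)
    fix z w assume "z \<in> {z\<in>fibre B x i. z i = a}" "w \<in> {z\<in>fibre B x i. z i = a}"
      and upd: "z(i := b) = w(i := b)"
    then have "z i = w i" by simp
    then show "z = w" using upd by (metis fun_upd_triv fun_upd_upd)
  qed
  show "(\<lambda>z. z(i := b)) ` {z\<in>fibre B x i. z i = a} \<subseteq> {z\<in>fibre B x i. z i = b}"
  proof clarify
    fix z assume z: "z \<in> fibre B x i" and za: "a = z i"
    have zB: "z \<in> B" and z_eq: "\<forall>j\<in>not_below i. z j = x j" using z by (auto simp: fibre_def)
    have zP: "z \<in> PiE I X" using zB lump_class_subset[OF B] by blast
    have "b \<in> X i" using partition_on_Phi[OF i x] C b by (auto simp: partition_on_def)
    then have z'P: "z(i := b) \<in> PiE I X" using zP i by (auto simp: PiE_iff extensional_def)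
    have "restrict z (A i) = restrict x (A i)"
      using above_subset_not_below_self z_eq by (intro restrict_ext) blast
    then have "same_block (\<Phi> i (restrict z (A i))) (z i) b"
      using C a b za by (auto simp: same_block_def)
    moreover have "restrict (z(i := b)) (A i) = restrict z (A i)"
      by (intro restrict_ext) (simp add: above_def)
    ultimately have "agrees_at z (z(i := b)) i" by (simp add: agrees_at_def)
    then have "(z, z(i := b)) \<in> lump_rel"
      by (intro lump_rel_if_eq_on[OF zP z'P, of "I - {i}"]) auto
    then have "z(i := b) \<in> B" using in_quotient_imp_closed[OF equiv_lump_rel B zB] by blast
    then show "z(i := b) \<in> fibre B x i \<and> (z(i := b)) i = b"
      using z_eq not_in_not_below by (auto simp: fibre_def)
  qed
qed

lemma fibre_sum_lumped:
  assumes xy: "(x, y) \<in> lump_rel" and i: "i \<in> I" and B: "B \<in> PiE I X // lump_rel"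
  shows "(\<Sum>z\<in>fibre B x i. P i (x i) (z i)) = (\<Sum>z\<in>fibre B x i. P i (y i) (z i))"
proof -
  define L where "L = \<Phi> i (restrict x (A i))"
  define n where "n a = card {z\<in>fibre B x i. z i = a}" for a
  have x: "x \<in> PiE I X" using xy by (simp add: lump_rel_iff)
  have fin: "finite (fibre B x i)" by (rule finite_fibre[OF B])
  have fibre_values: "(\<lambda>z. z i) ` fibre B x i \<subseteq> X i"
    using lump_class_subset[OF B] i by (auto simp: fibre_def PiE_iff)
  have lump: "lumpable (X i) (P i) L" unfolding L_def by (rule lumpable_Phi[OF i x])
  obtain C0 where "C0 \<in> L" "x i \<in> C0" "y i \<in> C0"
    using xy i unfolding lump_rel_iff agrees_at_def same_block_def L_def by blast
  then have block_sums: "(\<Sum>a\<in>C. P i (x i) a) = (\<Sum>a\<in>C. P i (y i) a)" if "C \<in> L" for C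
    using lump that unfolding lumpable_def by blast
  have n_const: "real (n a) = real (n b)" if "C \<in> L" "a \<in> C" "b \<in> C" for C a b
  proof -
    have "n a \<le> n b" "n b \<le> n a"
      using card_fibre_value_le[OF x i B] that unfolding n_def L_def by blast+
    then show ?thesis by simp
  qed
  have "(\<Sum>z\<in>fibre B x i. P i (x i) (z i)) = (\<Sum>a\<in>X i. real (n a) * P i (x i) a)"
    unfolding n_def by (rule sum_fun_comp[OF fin finite_X[OF i] fibre_values])
  also have "\<dots> = (\<Sum>a\<in>X i. real (n a) * P i (y i) a)"
  proof (rule sum_mult_eq_if_block_sums_eq)
    show "partition_on (X i) L" using lump by (simp add: lumpable_def)
  qed (use finite_X[OF i] block_sums n_const in blast)+
  also have "\<dots> = (\<Sum>z\<in>fibre B x i. P i (y i) (z i))"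
    unfolding n_def by (rule sum_fun_comp[OF fin finite_X[OF i] fibre_values, symmetric])
  finally show ?thesis .
qed

lemma lumpable_crested_product:
  "lumpable (PiE I X) (crested_product I R X p0 P) (PiE I X // lump_rel)"
  unfolding lumpable_def
proof (intro conjI ballI)
  show "partition_on (PiE I X) (PiE I X // lump_rel)"
    by (rule partition_on_quotient[OF equiv_lump_rel])
  fix B B' x y assume B: "B \<in> PiE I X // lump_rel" and B': "B' \<in> PiE I X // lump_rel"
    and x: "x \<in> B" and y: "y \<in> B"
  have xy: "(x, y) \<in> lump_rel" using quotient_eq_iff[OF equiv_lump_rel B B x y] by simp
  have fibre_sums: "(\<Sum>z\<in>fibre B' x i. P i (x i) (z i)) = (\<Sum>z\<in>fibre B' y i. P i (y i) (z i))"
    if "i \<in> I" for i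
    using fibre_sum_lumped[OF xy that B'] fibre_sum_eq_if_related[OF xy B', of "P i (y i)" i] by simp
  show "(\<Sum>z\<in>B'. crested_product I R X p0 P x z) = (\<Sum>z\<in>B'. crested_product I R X p0 P y z)"
    by (simp add: sum_crested_product_eq_fibre_sums[OF finite_lump_class[OF B']] fibre_sums)
qed

end

theorem theorem7:
  fixes I :: "'i set" and R :: "('i \<times> 'i) set" and X :: "'i \<Rightarrow> 'a set"
    and P :: "'i \<Rightarrow> 'a \<Rightarrow> 'a \<Rightarrow> real" and p0 :: "'i \<Rightarrow> real"
    and \<Phi> :: "'i \<Rightarrow> ('i \<Rightarrow> 'a) \<Rightarrow> 'a set set"
  assumes fin_I: "finite I"
    and poset: "partial_order_on I R"
    and fin_X: "\<And>i. i \<in> I \<Longrightarrow> finite (X i)"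
    and card_X: "\<And>i. i \<in> I \<Longrightarrow> card (X i) \<ge> 2"
    and chain: "\<And>i. i \<in> I \<Longrightarrow> markov_chain (X i) (P i)"
    and p0_pos: "\<And>i. i \<in> I \<Longrightarrow> p0 i > 0"
    and p0_sum: "(\<Sum>i\<in>I. p0 i) = 1"
    and Phi_lump: "\<And>i z. i \<in> I \<Longrightarrow> z \<in> PiE (above R I i) X \<Longrightarrow>
                      lumpable (X i) (P i) (\<Phi> i z)"
    and Phi_compat: "\<And>i x y. i \<in> I \<Longrightarrow> x \<in> PiE I X \<Longrightarrow> y \<in> PiE I X \<Longrightarrow>
        (\<forall>j\<in>above R I i. \<Phi> j (restrict x (above R I j)) = \<Phi> j (restrict y (above R I j))
            \<and> same_block (\<Phi> j (restrict x (above R I j))) (x j) (y j)) \<Longrightarrow>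
        \<Phi> i (restrict x (above R I i)) = \<Phi> i (restrict y (above R I i))"
  shows "lumpable (PiE I X) (crested_product I R X p0 P) (prod_lumping I R X \<Phi>)"
proof -
  interpret lumping_family I R X P \<Phi>
    using fin_I poset fin_X Phi_lump Phi_compat by unfold_locales blast+
  show ?thesis unfolding prod_lumping_def by (rule lumpable_crested_product)
qed

end
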